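(* Let $E$ be an $\mathbb{R}$-group, $X$ a locally compact (Hausdorff) space not reduced to one point, and $\mathcal{H}=(H_\varepsilon)_{\varepsilon\in E}$ a continuous absorptive action of $E$ on $X$ with center $\omega$. Then: (i) there is a neighbourhood base at $\omega$ consisting of balanced absorbent sets; (ii) a set $T\subset X$ is bounded if and only if it is relatively compact; (iii) elementary sets exist; moreover, if $F$ is an elementary set, then the sets $H_n(F)$, $n$ ranging over the positive integers (viewed as elements of $E$), form a neighbourhood base at $\omega$, and the sets $H_{n^{-1}}(F)$, $n$ ranging over the positive integers, cover $X$.
   Context: An $\mathbb{R}$-group is an abelian group $E$ (operation written multiplicatively) whose underlying set is a subset of $\mathbb{R}$ containing all positive integers, such that: (RG1) with the natural order of $\mathbb{R}$, $E$ is a totally ordered group; (RG2) with the topology induced from $\mathbb{R}$, $E$ is a locally compact group; (RG3) there is a nonconstant continuous homomorphism $h:E\to\mathbb{R}_+^*$ such that for every $\alpha\in E$ the set $\{\varepsilon\in E:\varepsilon\ge\alpha\}$ is integrable for $h\cdot m$, $m$ a Haar measure on $E$. $e$ is the identity of $E$, $\varepsilon^{-1}$ the group inverse, $\theta=\inf E\in\mathbb{R}\cup\{\pm\infty\}$; inequalities refer to the order of $\mathbb{R}$. An action of $E$ on $X$ is a family $\mathcal{H}=(H_\varepsilon)_{\varepsilon\in E}$ of bijections of $X$ with $H_\varepsilon\circ H_{\varepsilon'}=H_{\varepsilon\varepsilon'}$, $H_e=\mathrm{id}_X$; it is continuous if $(\varepsilon,x)\mapsto H_\varepsilon(x)$ is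 continuous on $E\times X$. It is absorptive if some $\omega\in X$ satisfies (ABS): for every neighbourhood $V$ of $\omega$ and every $x\in X$ there are a neighbourhood $U$ of $x$ and $\alpha\in E$ with $H_{\varepsilon^{-1}}(U)\subset V$ for all $\varepsilon\le\alpha$. For a continuous absorptive action such $\omega$ is unique and called the center. For $T,S\subset X$: $T$ absorbs $S$ if there is $\alpha\in E$ with $H_{\varepsilon^{-1}}(S)\subset T$ for all $\varepsilon\le\alpha$; $T$ is absorbent if it absorbs every singleton $\{x\}$, $x\in X$; $T$ is balanced if $H_{\varepsilon^{-1}}(T)\subset T$ for all $\varepsilon\le e$. $T$ is bounded if it is absorbed by every neighbourhood of the center $\omega$. $T$ is elementary if it is a balanced relatively compact neighbourhood of $\omega$. *)

theory Defs
  imports "HOL-Analysis.Analysis" "HOL-Algebra.Group"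
begin

text \<open>An R-group is represented by a HOL-Algebra monoid record G whose carrier is a set of
reals; the group operation is the abstract multiplication of G (not real multiplication),
while the order and the topology are those induced from the real line.\<close>

text \<open>A Haar measure on the locally compact group E = carrier G: a nonzero measure on the
Borel sets of E, invariant under translations, finite on compact sets. (On a second-countable
locally compact space such a measure is automatically Radon.)\<close>

definition haar_measure :: "real monoid \<Rightarrow> real measure \<Rightarrow> bool" where
  "haar_measure G m \<longleftrightarrow>
     space m = carrier G \<and>
     sets m = sets (restrict_space borel (carrier G)) \<and>
     (\<forall>a\<in>carrier G. \<forall>A\<in>sets m.
        (\<lambda>x. a \<otimes>\<^bsub>G\<^esub> x) ` A \<in> sets m \<and>
        emeasure m ((\<lambda>x. a \<otimes>\<^bsub>G\<^esub> x) ` A) = emeasure m A) \<and>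
     (\<forall>K. K \<subseteq> carrier G \<and> compact K \<longrightarrow> emeasure m K < \<infinity>) \<and>
     emeasure m (carrier G) \<noteq> 0"

definition R_group :: "real monoid \<Rightarrow> bool" where
  "R_group G \<longleftrightarrow>
     comm_group G \<and>
     {x::real. \<exists>n::nat. n \<ge> 1 \<and> x = real n} \<subseteq> carrier G \<and>
     \<comment> \<open>(RG1) totally ordered group for the natural order of the reals\<close>
     (\<forall>a\<in>carrier G. \<forall>b\<in>carrier G. \<forall>c\<in>carrier G.
        a \<le> b \<longrightarrow> a \<otimes>\<^bsub>G\<^esub> c \<le> b \<otimes>\<^bsub>G\<^esub> c) \<and>
     \<comment> \<open>(RG2) locally compact topological group for the induced topology\<close>
     continuous_on (carrier G \<times> carrier G) (\<lambda>(x, y). x \<otimes>\<^bsub>G\<^esub> y) \<and>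
     continuous_on (carrier G) (\<lambda>x. inv\<^bsub>G\<^esub> x) \<and>
     locally_compact_space (top_of_set (carrier G)) \<and>
     \<comment> \<open>(RG3)\<close>
     (\<exists>h :: real \<Rightarrow> real.
        continuous_on (carrier G) h \<and>
        (\<forall>x\<in>carrier G. h x > 0) \<and>
        (\<forall>x\<in>carrier G. \<forall>y\<in>carrier G. h (x \<otimes>\<^bsub>G\<^esub> y) = h x * h y) \<and>
        (\<exists>x\<in>carrier G. \<exists>y\<in>carrier G. h x \<noteq> h y) \<and>
        (\<exists>m. haar_measure G m \<and>
           (\<forall>\<alpha>\<in>carrier G. set_integrable m {\<epsilon>\<in>carrier G. \<alpha> \<le> \<epsilon>} h)))"

definition nbhd :: "'a topology \<Rightarrow> 'a \<Rightarrow> 'a set \<Rightarrow> bool" where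
  "nbhd X x N \<longleftrightarrow> N \<subseteq> topspace X \<and> (\<exists>U. openin X U \<and> x \<in> U \<and> U \<subseteq> N)"

definition is_action :: "real monoid \<Rightarrow> 'a topology \<Rightarrow> (real \<Rightarrow> 'a \<Rightarrow> 'a) \<Rightarrow> bool" where
  "is_action G X H \<longleftrightarrow>
     (\<forall>\<epsilon>\<in>carrier G. bij_betw (H \<epsilon>) (topspace X) (topspace X)) \<and>
     (\<forall>\<epsilon>\<in>carrier G. \<forall>\<epsilon>'\<in>carrier G. \<forall>x\<in>topspace X.
        H \<epsilon> (H \<epsilon>' x) = H (\<epsilon> \<otimes>\<^bsub>G\<^esub> \<epsilon>') x) \<and>
     (\<forall>x\<in>topspace X. H \<one>\<^bsub>G\<^esub> x = x)"

definition continuous_action :: "real monoid \<Rightarrow> 'a topology \<Rightarrow> (real \<Rightarrow> 'a \<Rightarrow> 'a) \<Rightarrow> bool" where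
  "continuous_action G X H \<longleftrightarrow> is_action G X H \<and>
     continuous_map (prod_topology (top_of_set (carrier G)) X) X (\<lambda>(\<epsilon>, x). H \<epsilon> x)"

definition absorptive_center :: "real monoid \<Rightarrow> 'a topology \<Rightarrow> (real \<Rightarrow> 'a \<Rightarrow> 'a) \<Rightarrow> 'a \<Rightarrow> bool" where
  "absorptive_center G X H \<omega> \<longleftrightarrow> \<omega> \<in> topspace X \<and>
     (\<forall>V. nbhd X \<omega> V \<longrightarrow> (\<forall>x\<in>topspace X. \<exists>U \<alpha>. nbhd X x U \<and> \<alpha> \<in> carrier G \<and>
        (\<forall>\<epsilon>\<in>carrier G. \<epsilon> \<le> \<alpha> \<longrightarrow> H (inv\<^bsub>G\<^esub> \<epsilon>) ` U \<subseteq> V)))"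

definition absorbs :: "real monoid \<Rightarrow> (real \<Rightarrow> 'a \<Rightarrow> 'a) \<Rightarrow> 'a set \<Rightarrow> 'a set \<Rightarrow> bool" where
  "absorbs G H T S \<longleftrightarrow>
     (\<exists>\<alpha>\<in>carrier G. \<forall>\<epsilon>\<in>carrier G. \<epsilon> \<le> \<alpha> \<longrightarrow> H (inv\<^bsub>G\<^esub> \<epsilon>) ` S \<subseteq> T)"

definition absorbent :: "real monoid \<Rightarrow> 'a topology \<Rightarrow> (real \<Rightarrow> 'a \<Rightarrow> 'a) \<Rightarrow> 'a set \<Rightarrow> bool" where
  "absorbent G X H T \<longleftrightarrow> (\<forall>x\<in>topspace X. absorbs G H T {x})"

definition balanced :: "real monoid \<Rightarrow> (real \<Rightarrow> 'a \<Rightarrow> 'a) \<Rightarrow> 'a set \<Rightarrow> bool" where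
  "balanced G H T \<longleftrightarrow>
     (\<forall>\<epsilon>\<in>carrier G. \<epsilon> \<le> \<one>\<^bsub>G\<^esub> \<longrightarrow> H (inv\<^bsub>G\<^esub> \<epsilon>) ` T \<subseteq> T)"

definition bounded_set :: "real monoid \<Rightarrow> 'a topology \<Rightarrow> (real \<Rightarrow> 'a \<Rightarrow> 'a) \<Rightarrow> 'a \<Rightarrow> 'a set \<Rightarrow> bool" where
  "bounded_set G X H \<omega> T \<longleftrightarrow> (\<forall>V. nbhd X \<omega> V \<longrightarrow> absorbs G H V T)"

definition relatively_compact :: "'a topology \<Rightarrow> 'a set \<Rightarrow> bool" where
  "relatively_compact X T \<longleftrightarrow> compactin X (X closure_of T)"

definition elementary :: "real monoid \<Rightarrow> 'a topology \<Rightarrow> (real \<Rightarrow> 'a \<Rightarrow> 'a) \<Rightarrow> 'a \<Rightarrow> 'a set \<Rightarrow> bool" where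
  "elementary G X H \<omega> T \<longleftrightarrow>
     balanced G H T \<and> relatively_compact X T \<and> nbhd X \<omega> T"

end

theory Submission
  imports Defs
begin

text \<open>
  Everything rests on two facts about a continuous absorptive action
  with center \<omega>:
  \<^item> the center is fixed by every H \<delta> (Hausdorff separation of \<omega> and H \<delta> \<omega>,
    played against (ABS) for a small enough parameter);
  \<^item> every neighbourhood V of \<omega> absorbs every compact set (cover the compact set by
    the finitely many neighbourhoods furnished by (ABS) and take the minimum of the
    finitely many parameters).
  From (ABS) one also gets directly that every neighbourhood of \<omega> is absorbent, and
  the Archimedean property of the reals turns "absorbed" into "absorbed by some H n".
  (i) The balanced hull of an (ABS)-neighbourhood U of \<omega> inside V, i.e. the union of
  the sets H(\<epsilon>\<inverse>) U with \<epsilon> \<le> \<alpha>, is a balanced neighbourhood of \<omega> inside V.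
  (ii) Relatively compact sets are bounded by the absorption of compact sets;
  conversely a bounded set is absorbed by a compact neighbourhood K of \<omega>, hence lies
  in the compact set H \<alpha> K.  (iii) A balanced neighbourhood inside a compact
  neighbourhood is elementary; the two base/cover statements follow from absorption
  of the compact closure of F and absorbency of F.
\<close>

lemma open_nbhd: "\<lbrakk>openin X U; x \<in> U\<rbrakk> \<Longrightarrow> nbhd X x U"
  unfolding nbhd_def using openin_subset by blast

lemma nbhd_superset: "\<lbrakk>nbhd X x N; N \<subseteq> M; M \<subseteq> topspace X\<rbrakk> \<Longrightarrow> nbhd X x M"
  unfolding nbhd_def by blast

lemma relatively_compact_if_subset_compact:
  assumes "Hausdorff_space X" and "compactin X K" and "T \<subseteq> K"
  shows "relatively_compact X T"
proof -
  have "X closure_of T \<subseteq> K"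
    using closure_of_minimal[OF assms(3) compactin_imp_closedin[OF assms(1,2)]] .
  then show ?thesis unfolding relatively_compact_def
    using closed_compactin[OF assms(2)] closedin_closure_of by blast
qed

locale ordered_real_group = comm_group G for G :: "real monoid" (structure) +
  assumes translation_mono:
    "\<lbrakk>a \<in> carrier G; b \<in> carrier G; c \<in> carrier G; a \<le> b\<rbrakk> \<Longrightarrow> a \<otimes> c \<le> b \<otimes> c"
    and naturals_in_carrier: "n \<ge> 1 \<Longrightarrow> real n \<in> carrier G"
begin

lemma inv_antimono:
  assumes a: "a \<in> carrier G" and b: "b \<in> carrier G" and le: "a \<le> b"
  shows "inv b \<le> inv a"
proof -
  have "a \<otimes> (inv a \<otimes> inv b) \<le> b \<otimes> (inv a \<otimes> inv b)"
    using translation_mono[OF a b _ le] a b by simp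
  moreover have "a \<otimes> (inv a \<otimes> inv b) = inv b"
    using a b by (simp flip: m_assoc)
  moreover have "b \<otimes> (inv a \<otimes> inv b) = inv a"
    using a b by (metis inv_closed m_comm r_inv r_one m_assoc)
  ultimately show ?thesis by simp
qed

lemma exists_nat_inv_le:
  assumes a: "\<alpha> \<in> carrier G"
  shows "\<exists>n::nat. n \<ge> 1 \<and> inv (real n) \<le> \<alpha>"
proof -
  define n where "n = nat (ceiling (max 1 (inv \<alpha>)))"
  have n1: "n \<ge> 1" unfolding n_def by linarith
  have "inv \<alpha> \<le> real n" unfolding n_def by linarith
  from inv_antimono[OF _ naturals_in_carrier[OF n1] this] a
  have "inv (real n) \<le> \<alpha>" by simp
  with n1 show ?thesis by blast
qed

end

text \<open>Every R-group carries this structure.\<close>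
lemma R_group_imp_ordered_real_group:
  assumes "R_group G"
  shows "ordered_real_group G"
  using assms unfolding R_group_def ordered_real_group_def ordered_real_group_axioms_def
  by blast

locale real_group_action = ordered_real_group G for G :: "real monoid" (structure) +
  fixes X :: "'a topology" and H :: "real \<Rightarrow> 'a \<Rightarrow> 'a"
  assumes action: "continuous_action G X H"
begin

lemma H_mult:
  "\<lbrakk>a \<in> carrier G; b \<in> carrier G; x \<in> topspace X\<rbrakk> \<Longrightarrow> H a (H b x) = H (a \<otimes> b) x"
  using action unfolding continuous_action_def is_action_def by blast

lemma H_one: "x \<in> topspace X \<Longrightarrow> H \<one> x = x"
  using action unfolding continuous_action_def is_action_def by blast

lemma H_in_topspace: "\<lbrakk>a \<in> carrier G; x \<in> topspace X\<rbrakk> \<Longrightarrow> H a x \<in> topspace X"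
  using action unfolding continuous_action_def is_action_def bij_betw_def by blast

lemma H_inv_cancel: "\<lbrakk>a \<in> carrier G; x \<in> topspace X\<rbrakk> \<Longrightarrow> H a (H (inv a) x) = x"
  by (simp add: H_mult H_one)

lemma H_cancel_inv: "\<lbrakk>a \<in> carrier G; x \<in> topspace X\<rbrakk> \<Longrightarrow> H (inv a) (H a x) = x"
  by (simp add: H_mult H_one)

lemma H_continuous:
  assumes a: "a \<in> carrier G"
  shows "continuous_map X X (H a)"
proof -
  have joint: "continuous_map (prod_topology (top_of_set (carrier G)) X) X (\<lambda>(\<epsilon>, x). H \<epsilon> x)"
    using action unfolding continuous_action_def by blast
  have "continuous_map X (prod_topology (top_of_set (carrier G)) X) (\<lambda>x. (a, x))"
    by (intro continuous_map_pairedI) (use a in auto)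
  from continuous_map_compose[OF this joint] show ?thesis by (simp add: o_def)
qed

text \<open>Each H a is an open map: its image of U is the preimage of U under H (inv a).\<close>
lemma H_open:
  assumes a: "a \<in> carrier G" and U: "openin X U"
  shows "openin X (H a ` U)"
proof -
  have U_sub: "U \<subseteq> topspace X" using U openin_subset by blast
  have "H a ` U = {x \<in> topspace X. H (inv a) x \<in> U}"
  proof (intro equalityI subsetI)
    fix x assume "x \<in> H a ` U"
    then show "x \<in> {x \<in> topspace X. H (inv a) x \<in> U}"
      using U_sub a H_in_topspace H_cancel_inv by auto
  next
    fix x assume x: "x \<in> {x \<in> topspace X. H (inv a) x \<in> U}"
    then have "x = H a (H (inv a) x)" using a H_inv_cancel by simp
    with x show "x \<in> H a ` U" by blast
  qed
  with openin_continuous_map_preimage[OF H_continuous U] a show ?thesis by simp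
qed

end

lemma absorbs_mono: "\<lbrakk>absorbs G H V S; T \<subseteq> S\<rbrakk> \<Longrightarrow> absorbs G H V T"
  unfolding absorbs_def by blast

locale absorptive_action = real_group_action G X H for G :: "real monoid" (structure) and X H +
  fixes \<omega> :: 'a
  assumes center: "absorptive_center G X H \<omega>"
begin

lemma center_in_topspace: "\<omega> \<in> topspace X"
  using center unfolding absorptive_center_def by blast

lemma absorbed_open_nbhd:
  assumes "nbhd X \<omega> V" "x \<in> topspace X"
  shows "\<exists>U. openin X U \<and> x \<in> U \<and> absorbs G H V U"
proof -
  obtain N \<alpha> where N: "nbhd X x N" "\<alpha> \<in> carrier G"
    "\<forall>\<epsilon>\<in>carrier G. \<epsilon> \<le> \<alpha> \<longrightarrow> H (inv \<epsilon>) ` N \<subseteq> V"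
    using center assms unfolding absorptive_center_def by blast
  then have "absorbs G H V N" unfolding absorbs_def by blast
  moreover obtain U where "openin X U" "x \<in> U" "U \<subseteq> N" using N(1) unfolding nbhd_def by blast
  ultimately show ?thesis using absorbs_mono[of G H V N U] by blast
qed

lemma nbhd_absorbent:
  assumes "nbhd X \<omega> V"
  shows "absorbent G X H V"
  unfolding absorbent_def
proof
  fix x assume "x \<in> topspace X"
  then obtain U where "x \<in> U" "absorbs G H V U" using absorbed_open_nbhd[OF assms] by blast
  then show "absorbs G H V {x}" using absorbs_mono[of G H V U "{x}"] by blast
qed

lemma absorbs_nat:
  assumes "absorbs G H T S"
  shows "\<exists>n::nat. n \<ge> 1 \<and> H (real n) ` S \<subseteq> T"
proof -
  obtain \<alpha> where \<alpha>: "\<alpha> \<in> carrier G" "\<forall>\<epsilon>\<in>carrier G. \<epsilon> \<le> \<alpha> \<longrightarrow> H (inv \<epsilon>) ` S \<subseteq> T"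
    using assms unfolding absorbs_def by blast
  obtain n :: nat where n: "n \<ge> 1" "inv (real n) \<le> \<alpha>"
    using exists_nat_inv_le[OF \<alpha>(1)] by blast
  have "real n \<in> carrier G" using naturals_in_carrier[OF n(1)] .
  then have "H (inv (inv (real n))) ` S \<subseteq> T" using \<alpha>(2) n(2) inv_closed by blast
  with \<open>real n \<in> carrier G\<close> n(1) show ?thesis by auto
qed

lemma absorbs_Un:
  assumes "absorbs G H V S1" "absorbs G H V S2"
  shows "absorbs G H V (S1 \<union> S2)"
proof -
  obtain a1 where a1: "a1 \<in> carrier G" "\<forall>\<epsilon>\<in>carrier G. \<epsilon> \<le> a1 \<longrightarrow> H (inv \<epsilon>) ` S1 \<subseteq> V"
    using assms(1) unfolding absorbs_def by blast
  obtain a2 where a2: "a2 \<in> carrier G" "\<forall>\<epsilon>\<in>carrier G. \<epsilon> \<le> a2 \<longrightarrow> H (inv \<epsilon>) ` S2 \<subseteq> V"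
    using assms(2) unfolding absorbs_def by blast
  have "min a1 a2 \<in> carrier G" using a1 a2 by (simp add: min_def)
  moreover have "H (inv \<epsilon>) ` (S1 \<union> S2) \<subseteq> V" if "\<epsilon> \<in> carrier G" "\<epsilon> \<le> min a1 a2" for \<epsilon>
    using that a1(2) a2(2) by (simp add: image_Un)
  ultimately show ?thesis unfolding absorbs_def by blast
qed

text \<open>Every neighbourhood of the center absorbs every compact set: cover the set by
  finitely many open sets it absorbs.\<close>
lemma absorbs_compact:
  assumes V: "nbhd X \<omega> V" and C: "compactin X C"
  shows "absorbs G H V C"
proof -
  from absorbed_open_nbhd[OF V] obtain Uf where
    Uf: "\<And>x. x \<in> topspace X \<Longrightarrow> openin X (Uf x) \<and> x \<in> Uf x \<and> absorbs G H V (Uf x)"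
    by metis
  have C_sub: "C \<subseteq> topspace X" using C compactin_subset_topspace by blast
  have absorbs_Uf: "absorbs G H V (Uf x)" if "x \<in> C" for x using Uf C_sub that by blast
  have "(\<forall>U\<in>Uf ` C. openin X U) \<and> C \<subseteq> \<Union>(Uf ` C)" using Uf C_sub by blast
  then obtain \<F> where \<F>: "finite \<F>" "\<F> \<subseteq> Uf ` C" "C \<subseteq> \<Union>\<F>"
    using C unfolding compactin_def by meson
  then obtain C' where C': "C' \<subseteq> C" "finite C'" "\<F> = Uf ` C'"
    by (meson finite_subset_image)
  have "absorbs G H V (\<Union>(Uf ` C'))" using C'(2,1)
  proof (induction C' rule: finite_induct)
    case empty then show ?case unfolding absorbs_def by auto
  next
    case (insert x C')
    then have "absorbs G H V (Uf x)" "absorbs G H V (\<Union>(Uf ` C'))" using absorbs_Uf by auto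
    then show ?case using absorbs_Un by simp
  qed
  then show ?thesis using \<F>(3) C'(3) absorbs_mono[of G H V _ C] by blast
qed

lemma relatively_compact_imp_bounded:
  assumes "T \<subseteq> topspace X" and "relatively_compact X T"
  shows "bounded_set G X H \<omega> T"
  unfolding bounded_set_def
proof (intro allI impI)
  fix V assume "nbhd X \<omega> V"
  then have "absorbs G H V (X closure_of T)"
    using absorbs_compact assms(2) unfolding relatively_compact_def by blast
  then show "absorbs G H V T" by (rule absorbs_mono[OF _ closure_of_subset[OF assms(1)]])
qed

text \<open>If H \<delta> \<omega> \<noteq> \<omega>,
  separate them by open sets A and B; since the neighbourhoods P = H \<delta>\<inverse>(A) and B of \<omega>
  absorb \<omega>, for \<epsilon> small enough both H \<delta> (H \<epsilon>\<inverse> \<omega>) \<in> A and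
  H (\<epsilon> \<delta>\<inverse>)\<inverse> \<omega> = H \<delta> (H \<epsilon>\<inverse> \<omega>) \<in> B.\<close>
lemma center_fixed:
  assumes haus: "Hausdorff_space X" and d: "\<delta> \<in> carrier G"
  shows "H \<delta> \<omega> = \<omega>"
proof (rule ccontr)
  assume ne: "H \<delta> \<omega> \<noteq> \<omega>"
  obtain A B where A: "openin X A" and B: "openin X B" and "H \<delta> \<omega> \<in> A" "\<omega> \<in> B"
    and disj: "disjnt A B"
    using haus ne H_in_topspace[OF d center_in_topspace] center_in_topspace
    unfolding Hausdorff_space_def by blast
  define P where "P = {x \<in> topspace X. H \<delta> x \<in> A}"
  have P: "openin X P" unfolding P_def by (rule openin_continuous_map_preimage[OF H_continuous[OF d] A])
  have "\<omega> \<in> P" unfolding P_def using \<open>H \<delta> \<omega> \<in> A\<close> center_in_topspace by simp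
  have absorbs_center: "\<exists>\<alpha>\<in>carrier G. \<forall>\<epsilon>\<in>carrier G. \<epsilon> \<le> \<alpha> \<longrightarrow> H (inv \<epsilon>) \<omega> \<in> N"
    if "openin X N" "\<omega> \<in> N" for N
    using nbhd_absorbent[OF open_nbhd[OF that]] center_in_topspace
    unfolding absorbent_def absorbs_def by auto
  obtain \<alpha>1 where \<alpha>1: "\<alpha>1 \<in> carrier G" "\<forall>\<epsilon>\<in>carrier G. \<epsilon> \<le> \<alpha>1 \<longrightarrow> H (inv \<epsilon>) \<omega> \<in> P"
    using absorbs_center[OF P \<open>\<omega> \<in> P\<close>] by blast
  obtain \<alpha>2 where \<alpha>2: "\<alpha>2 \<in> carrier G" "\<forall>\<epsilon>\<in>carrier G. \<epsilon> \<le> \<alpha>2 \<longrightarrow> H (inv \<epsilon>) \<omega> \<in> B"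
    using absorbs_center[OF B \<open>\<omega> \<in> B\<close>] by blast
  define \<epsilon> where "\<epsilon> = min \<alpha>1 (\<alpha>2 \<otimes> \<delta>)"
  have e: "\<epsilon> \<in> carrier G" unfolding \<epsilon>_def using \<alpha>1(1) \<alpha>2(1) d by (simp add: min_def)
  have "\<epsilon> \<le> \<alpha>1" unfolding \<epsilon>_def by simp
  then have "H (inv \<epsilon>) \<omega> \<in> P" using \<alpha>1(2) e by blast
  then have in_A: "H \<delta> (H (inv \<epsilon>) \<omega>) \<in> A" unfolding P_def by simp
  have "\<epsilon> \<otimes> inv \<delta> \<le> (\<alpha>2 \<otimes> \<delta>) \<otimes> inv \<delta>"
    using translation_mono[OF e _ _ , of "\<alpha>2 \<otimes> \<delta>" "inv \<delta>"] \<alpha>2(1) d unfolding \<epsilon>_def by auto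
  also have "\<dots> = \<alpha>2" using \<alpha>2(1) d by (simp add: m_assoc)
  finally have "H (inv (\<epsilon> \<otimes> inv \<delta>)) \<omega> \<in> B" using \<alpha>2(2) e d by simp
  moreover have "inv (\<epsilon> \<otimes> inv \<delta>) = \<delta> \<otimes> inv \<epsilon>" using e d by (simp add: inv_mult m_comm)
  ultimately have "H \<delta> (H (inv \<epsilon>) \<omega>) \<in> B" using H_mult e d center_in_topspace by simp
  with in_A disj show False unfolding disjnt_def by blast
qed

lemma H_image_nbhd:
  assumes "Hausdorff_space X" and a: "a \<in> carrier G" and N: "nbhd X \<omega> N"
  shows "nbhd X \<omega> (H a ` N)"
proof -
  obtain U where U: "openin X U" "\<omega> \<in> U" "U \<subseteq> N" using N unfolding nbhd_def by blast
  have "\<omega> = H a \<omega>" using center_fixed[OF assms(1) a] by simp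
  then have "\<omega> \<in> H a ` U" using U(2) by (rule image_eqI)
  moreover have "H a ` N \<subseteq> topspace X" using N H_in_topspace a unfolding nbhd_def by auto
  ultimately show ?thesis unfolding nbhd_def using H_open[OF a U(1)] U(3) by blast
qed

text \<open>Part (i): every neighbourhood V of the center contains a balanced one, namely the
  balanced hull of an (ABS)-neighbourhood U of \<omega> whose images H(\<epsilon>\<inverse>) U, \<epsilon> \<le> \<alpha>,
  lie in V.\<close>
lemma balanced_nbhd_inside:
  assumes haus: "Hausdorff_space X" and V: "nbhd X \<omega> V"
  shows "\<exists>W. nbhd X \<omega> W \<and> W \<subseteq> V \<and> balanced G H W"
proof -
  obtain U where U: "openin X U" "\<omega> \<in> U" "absorbs G H V U"
    using absorbed_open_nbhd[OF V center_in_topspace] by blast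
  then obtain \<alpha> where \<alpha>: "\<alpha> \<in> carrier G" "\<forall>\<epsilon>\<in>carrier G. \<epsilon> \<le> \<alpha> \<longrightarrow> H (inv \<epsilon>) ` U \<subseteq> V"
    unfolding absorbs_def by blast
  have U_sub: "U \<subseteq> topspace X" using U(1) openin_subset by blast
  define W where "W = (\<Union>\<epsilon>\<in>{\<epsilon>\<in>carrier G. \<epsilon> \<le> \<alpha>}. H (inv \<epsilon>) ` U)"
  have "W \<subseteq> V" unfolding W_def using \<alpha>(2) by blast
  have "nbhd X \<omega> (H (inv \<alpha>) ` U)"
    using H_image_nbhd[OF haus _ open_nbhd[OF U(1,2)]] \<alpha>(1) by simp
  moreover have "H (inv \<alpha>) ` U \<subseteq> W" unfolding W_def using \<alpha>(1) by blast
  moreover have "W \<subseteq> topspace X"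
    unfolding W_def using U_sub H_in_topspace by auto
  ultimately have "nbhd X \<omega> W" by (rule nbhd_superset)
  have "balanced G H W" unfolding balanced_def
  proof (intro ballI impI subsetI)
    fix \<delta> y assume d: "\<delta> \<in> carrier G" "\<delta> \<le> \<one>" and y: "y \<in> H (inv \<delta>) ` W"
    then obtain \<epsilon> u where e: "\<epsilon> \<in> carrier G" "\<epsilon> \<le> \<alpha>" "u \<in> U" "y = H (inv \<delta>) (H (inv \<epsilon>) u)"
      unfolding W_def by blast
    have "\<delta> \<otimes> \<epsilon> \<le> \<one> \<otimes> \<epsilon>" using translation_mono[OF d(1) _ e(1) d(2)] by simp
    then have le: "\<delta> \<otimes> \<epsilon> \<le> \<alpha>" using e by simp
    have "y = H (inv \<delta> \<otimes> inv \<epsilon>) u"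
      using e d U_sub H_mult[of "inv \<delta>" "inv \<epsilon>" u] by auto
    also have "inv \<delta> \<otimes> inv \<epsilon> = inv (\<delta> \<otimes> \<epsilon>)" using e d by (simp add: inv_mult m_comm)
    finally show "y \<in> W" unfolding W_def using le e d by blast
  qed
  with \<open>nbhd X \<omega> W\<close> \<open>W \<subseteq> V\<close> show ?thesis by blast
qed

text \<open>Part (ii), converse direction: a bounded set is absorbed by a compact neighbourhood
  K of the center, hence contained in the compact set H \<alpha> K.\<close>
lemma bounded_imp_relatively_compact:
  assumes haus: "Hausdorff_space X" and lc: "locally_compact_space X"
    and T: "T \<subseteq> topspace X" and bdd: "bounded_set G X H \<omega> T"
  shows "relatively_compact X T"
proof -
  obtain U K where UK: "openin X U" "compactin X K" "\<omega> \<in> U" "U \<subseteq> K"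
    using lc center_in_topspace unfolding locally_compact_space_def by blast
  then have "nbhd X \<omega> K" unfolding nbhd_def using compactin_subset_topspace by blast
  then obtain \<alpha> where \<alpha>: "\<alpha> \<in> carrier G" "\<forall>\<epsilon>\<in>carrier G. \<epsilon> \<le> \<alpha> \<longrightarrow> H (inv \<epsilon>) ` T \<subseteq> K"
    using bdd unfolding bounded_set_def absorbs_def by blast
  have "T \<subseteq> H \<alpha> ` K"
  proof
    fix t assume t: "t \<in> T"
    have "t = H \<alpha> (H (inv \<alpha>) t)" using H_inv_cancel \<alpha>(1) t T by auto
    moreover have "H (inv \<alpha>) t \<in> K" using \<alpha> t by blast
    ultimately show "t \<in> H \<alpha> ` K" by blast
  qed
  with relatively_compact_if_subset_compact[OF haus image_compactin[OF UK(2) H_continuous[OF \<alpha>(1)]]]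
  show ?thesis by blast
qed

text \<open>Part (iii), existence: a balanced neighbourhood inside a compact neighbourhood.\<close>
lemma elementary_exists:
  assumes haus: "Hausdorff_space X" and lc: "locally_compact_space X"
  shows "\<exists>F. elementary G X H \<omega> F"
proof -
  obtain U K where UK: "openin X U" "compactin X K" "\<omega> \<in> U" "U \<subseteq> K"
    using lc center_in_topspace unfolding locally_compact_space_def by blast
  obtain W where W: "nbhd X \<omega> W" "W \<subseteq> U" "balanced G H W"
    using balanced_nbhd_inside[OF haus open_nbhd[OF UK(1,3)]] by blast
  have "relatively_compact X W"
    using relatively_compact_if_subset_compact[OF haus UK(2)] W(2) UK(4) by blast
  with W show ?thesis unfolding elementary_def by blast
qed

text \<open>Part (iii), the images H n F of an elementary set shrink to the center: each is a
  neighbourhood, and every neighbourhood absorbs the compact closure of F.\<close>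
lemma elementary_nbhd_base:
  assumes haus: "Hausdorff_space X" and F: "elementary G X H \<omega> F"
  shows "(\<forall>n::nat. n \<ge> 1 \<longrightarrow> nbhd X \<omega> (H (real n) ` F))
       \<and> (\<forall>V. nbhd X \<omega> V \<longrightarrow> (\<exists>n::nat. n \<ge> 1 \<and> H (real n) ` F \<subseteq> V))"
proof -
  have nF: "nbhd X \<omega> F" using F unfolding elementary_def by blast
  have "F \<subseteq> topspace X" using nF unfolding nbhd_def by blast
  moreover have "relatively_compact X F" using F unfolding elementary_def by blast
  ultimately have bdd: "bounded_set G X H \<omega> F" by (rule relatively_compact_imp_bounded)
  show ?thesis
  proof (intro conjI allI impI)
    fix n :: nat assume "n \<ge> 1"
    then show "nbhd X \<omega> (H (real n) ` F)" by (rule H_image_nbhd[OF haus naturals_in_carrier nF])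
  next
    fix V assume "nbhd X \<omega> V"
    then show "\<exists>n::nat. n \<ge> 1 \<and> H (real n) ` F \<subseteq> V"
      using bdd absorbs_nat unfolding bounded_set_def by blast
  qed
qed

text \<open>Part (iii), the images H n\<inverse> F of an elementary set cover X, since F is absorbent.\<close>
lemma elementary_cover:
  assumes F: "elementary G X H \<omega> F"
  shows "(\<Union>n\<in>{n::nat. n \<ge> 1}. H (inv (real n)) ` F) = topspace X"
proof (intro equalityI subsetI)
  have nF: "nbhd X \<omega> F" using F unfolding elementary_def by blast
  then have F_sub: "F \<subseteq> topspace X" unfolding nbhd_def by blast
  fix x
  show "x \<in> topspace X" if "x \<in> (\<Union>n\<in>{n::nat. n \<ge> 1}. H (inv (real n)) ` F)"
    using that F_sub H_in_topspace naturals_in_carrier by auto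
  assume x: "x \<in> topspace X"
  then have "absorbs G H F {x}" using nbhd_absorbent[OF nF] unfolding absorbent_def by blast
  then obtain n :: nat where n: "n \<ge> 1" "H (real n) ` {x} \<subseteq> F" using absorbs_nat by blast
  have "x = H (inv (real n)) (H (real n) x)"
    using H_cancel_inv naturals_in_carrier[OF n(1)] x by simp
  with n show "x \<in> (\<Union>n\<in>{n::nat. n \<ge> 1}. H (inv (real n)) ` F)" by blast
qed

end

theorem proposition2p3:
  fixes G :: "real monoid" and X :: "'a topology" and H :: "real \<Rightarrow> 'a \<Rightarrow> 'a" and \<omega> :: 'a
  assumes "R_group G"
    and "Hausdorff_space X" and "locally_compact_space X"
    and "\<exists>x\<in>topspace X. \<exists>y\<in>topspace X. x \<noteq> y"
    and "continuous_action G X H"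
    and "absorptive_center G X H \<omega>"
  shows "(\<forall>V. nbhd X \<omega> V \<longrightarrow>
            (\<exists>W. nbhd X \<omega> W \<and> W \<subseteq> V \<and> balanced G H W \<and> absorbent G X H W))
    \<and> (\<forall>T. T \<subseteq> topspace X \<longrightarrow> (bounded_set G X H \<omega> T \<longleftrightarrow> relatively_compact X T))
    \<and> (\<exists>F. elementary G X H \<omega> F)
    \<and> (\<forall>F. elementary G X H \<omega> F \<longrightarrow>
          (\<forall>n::nat. n \<ge> 1 \<longrightarrow> nbhd X \<omega> (H (real n) ` F))
        \<and> (\<forall>V. nbhd X \<omega> V \<longrightarrow> (\<exists>n::nat. n \<ge> 1 \<and> H (real n) ` F \<subseteq> V))
        \<and> (\<Union>n\<in>{n::nat. n \<ge> 1}. H (inv\<^bsub>G\<^esub> (real n)) ` F) = topspace X)"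
proof -
  interpret absorptive_action G X H \<omega>
    using R_group_imp_ordered_real_group[OF assms(1)] assms(5,6)
    by (simp add: absorptive_action_def absorptive_action_axioms_def
        real_group_action_def real_group_action_axioms_def)
  have part_i: "\<exists>W. nbhd X \<omega> W \<and> W \<subseteq> V \<and> balanced G H W \<and> absorbent G X H W"
    if "nbhd X \<omega> V" for V
    using balanced_nbhd_inside[OF assms(2) that] nbhd_absorbent by blast
  have part_ii: "bounded_set G X H \<omega> T \<longleftrightarrow> relatively_compact X T" if "T \<subseteq> topspace X" for T
    using bounded_imp_relatively_compact[OF assms(2,3) that]
      relatively_compact_imp_bounded[OF that] by blast
  have part_iii: "elementary G X H \<omega> F \<Longrightarrow>
      (\<forall>n::nat. n \<ge> 1 \<longrightarrow> nbhd X \<omega> (H (real n) ` F))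
    \<and> (\<forall>V. nbhd X \<omega> V \<longrightarrow> (\<exists>n::nat. n \<ge> 1 \<and> H (real n) ` F \<subseteq> V))
    \<and> (\<Union>n\<in>{n::nat. n \<ge> 1}. H (inv\<^bsub>G\<^esub> (real n)) ` F) = topspace X" for F
    using elementary_nbhd_base[OF assms(2)] elementary_cover by simp
  show ?thesis
    using part_i part_ii elementary_exists[OF assms(2,3)] part_iii by blast
qed

end
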